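(* Let $m\ge 2$ be an integer, and let $P_n\in\mathbb{R}^{m}$ and $P_n^k\in\mathbb{R}^{m}$ be arbitrary vectors (the latter a fixed linearization point), with components $P_{n,j}$ and $P^k_{n,j}$. For $i\in\{1,\dots,m\}$ define the softmax component $$R_{n,i}(P_n)=\frac{\exp(P_{n,i})}{\sum_{j=1}^{m}\exp(P_{n,j})},$$ and the log-sum-exp function $\mathrm{LSE}(P_n)=\ln\Bigl(\sum_{j=1}^{m}\exp(P_{n,j})\Bigr)$. Let $\exp(P_n^k)$ denote the vector with components $\exp(P^k_{n,j})$, and define $$\underline{R}_{n,i}(P_n)=1-\sum_{j\neq i}^{m}\exp(P_{n,j})\,\exp\Bigl\{-\mathrm{LSE}(P_n^k)-\Bigl[\frac{\exp(P_n^k)}{\sum_{j=1}^{m}\exp(P^k_{n,j})}\Bigr]^{\top}(P_n-P_n^k)\Bigr\}.$$ Then for all $P_n\in\mathbb{R}^{m}$ we have $R_{n,i}(P_n)\ge \underline{R}_{n,i}(P_n)$, and moreover $\underline{R}_{n,i}$ is a concave function of $P_n$.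
   Context: Here $P_n$ plays the role of the $n$th row of a matrix $P\in\mathbb{R}^{m\times m}$ to which the softmax function is applied row-wise, and $P_n^k$ is the corresponding row of a fixed matrix $P^k$ (a linearization point). The sum $\sum_{j\neq i}^{m}$ means the sum over $j\in\{1,\dots,m\}\setminus\{i\}$. *)

theory Defs
  imports "HOL-Analysis.Analysis"
begin

text \<open>Vectors in R^m are modelled as real^'m for a finite index type 'm with CARD('m) = m.\<close>

definition softmax :: "real^'m \<Rightarrow> 'm \<Rightarrow> real" where
  "softmax P i = exp (P $ i) / (\<Sum>j\<in>UNIV. exp (P $ j))"

definition LSE :: "real^'m \<Rightarrow> real" where
  "LSE P = ln (\<Sum>j\<in>UNIV. exp (P $ j))"

definition softmax_lower :: "real^'m \<Rightarrow> 'm \<Rightarrow> real^'m \<Rightarrow> real" where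
  "softmax_lower Pk i P =
     1 - (\<Sum>j\<in>UNIV - {i}. exp (P $ j) *
            exp (- LSE Pk
                 - (\<chi> j. exp (Pk $ j) / (\<Sum>l\<in>UNIV. exp (Pk $ l))) \<bullet> (P - Pk)))"

end

theory Submission
  imports Defs
begin

text \<open>The gradient of the convex function LSE is the softmax vector, so
  LSE lies above its linearization at Pk.  Since 1 - softmax P i is the sum over
  j \<noteq> i of exp (P$j - LSE P), replacing LSE P by that smaller affine function
  enlarges every summand, which gives the lower bound; and each new summand is exp of
  an affine function of P, hence convex, so the bound is concave.\<close>

lemma convex_on_compose_affine:
  fixes f :: "'b::real_vector \<Rightarrow> real" and l :: "'a::real_vector \<Rightarrow> 'b"
  assumes "convex_on UNIV f" and "linear l"
  shows "convex_on UNIV (\<lambda>x. f (l x + c))"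
  unfolding convex_on_def
proof (intro conjI convex_UNIV ballI allI impI)
  fix x y :: 'a and u v :: real
  assume "u \<ge> 0" "v \<ge> 0" "u + v = 1"
  moreover have "l (u *\<^sub>R x + v *\<^sub>R y) + c = u *\<^sub>R (l x + c) + v *\<^sub>R (l y + c)"
    using \<open>u + v = 1\<close> \<open>linear l\<close>
    by (simp add: linear_add linear_scale algebra_simps flip: scaleR_add_left)
  ultimately show "f (l (u *\<^sub>R x + v *\<^sub>R y) + c) \<le> u * f (l x + c) + v * f (l y + c)"
    using assms(1) by (simp add: convex_on_def)
qed

lemma convex_on_sum_fun:
  assumes "finite A" and "convex S" and "\<And>j. j \<in> A \<Longrightarrow> convex_on S (f j)"
  shows "convex_on S (\<lambda>x. \<Sum>j\<in>A. f j x)"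
  using assms by (induction A rule: finite_induct) (auto simp: convex_on_const)

definition LSE_linearization :: "real^'m \<Rightarrow> real^'m \<Rightarrow> real" where
  "LSE_linearization Pk P = LSE Pk + (\<chi> j. softmax Pk j) \<bullet> (P - Pk)"

lemma sum_exp_pos: "(\<Sum>j\<in>UNIV. exp (P $ j)) > 0"
  for P :: "real^'m"
  by (intro sum_pos) auto

lemma sum_softmax: "(\<Sum>j\<in>UNIV. softmax P j) = 1"
  using sum_exp_pos[of P] by (simp add: softmax_def flip: sum_divide_distrib)

lemma softmax_eq_exp_minus_LSE: "softmax P i = exp (P $ i - LSE P)"
  using sum_exp_pos[of P] by (simp add: softmax_def LSE_def exp_diff)

lemma one_minus_softmax: "1 - softmax P i = (\<Sum>j\<in>UNIV - {i}. exp (P $ j - LSE P))"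
  using sum_softmax[of P] by (simp add: sum.remove[of UNIV i] softmax_eq_exp_minus_LSE)

lemma LSE_linearization_le: "LSE_linearization Pk P \<le> LSE P"
proof -
  define K where "K = (\<Sum>j\<in>UNIV. exp (Pk $ j))"
  have "K > 0" unfolding K_def by (rule sum_exp_pos)
  have "exp ((\<chi> j. softmax Pk j) \<bullet> (P - Pk))
      = exp (\<Sum>j\<in>UNIV. softmax Pk j *\<^sub>R (P $ j - Pk $ j))"
    by (simp add: inner_vec_def mult.commute)
  also have "\<dots> \<le> (\<Sum>j\<in>UNIV. softmax Pk j * exp (P $ j - Pk $ j))"
    using sum_exp_pos[of Pk]
    by (intro convex_on_sum[OF _ _ exp_convex] sum_softmax) (auto simp: softmax_def)
  also have "\<dots> = (\<Sum>j\<in>UNIV. exp (P $ j)) / K"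
    by (simp add: softmax_def exp_diff K_def sum_divide_distrib)
  finally have "exp ((\<chi> j. softmax Pk j) \<bullet> (P - Pk)) * K \<le> (\<Sum>j\<in>UNIV. exp (P $ j))"
    using \<open>K > 0\<close> by (simp add: pos_le_divide_eq)
  then have "ln (exp ((\<chi> j. softmax Pk j) \<bullet> (P - Pk)) * K) \<le> LSE P"
    unfolding LSE_def using \<open>K > 0\<close> sum_exp_pos[of P] by (subst ln_le_cancel_iff) auto
  then show ?thesis
    using \<open>K > 0\<close> by (simp add: LSE_linearization_def LSE_def K_def ln_mult)
qed

lemma softmax_lower_eq:
  "softmax_lower Pk i P = 1 - (\<Sum>j\<in>UNIV - {i}. exp (P $ j - LSE_linearization Pk P))"
  by (simp add: softmax_lower_def LSE_linearization_def softmax_def exp_diff exp_minus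
      exp_add field_simps)

lemma softmax_ge_softmax_lower: "softmax_lower Pk i P \<le> softmax P i"
proof -
  have "(\<Sum>j\<in>UNIV - {i}. exp (P $ j - LSE P))
      \<le> (\<Sum>j\<in>UNIV - {i}. exp (P $ j - LSE_linearization Pk P))"
    by (intro sum_mono) (simp add: LSE_linearization_le)
  then show ?thesis
    using one_minus_softmax[of P i] by (simp add: softmax_lower_eq)
qed

lemma concave_softmax_lower:
  fixes Pk :: "real^'m"
  shows "concave_on UNIV (softmax_lower Pk i)"
proof -
  define w where "w = (\<chi> j. softmax Pk j)"
  have affine: "P $ j - LSE_linearization Pk P = (P $ j - w \<bullet> P) + (w \<bullet> Pk - LSE Pk)"
    for P :: "real^'m" and j
    by (simp add: LSE_linearization_def w_def inner_diff_right)
  have "linear (\<lambda>P::real^'m. P $ j - w \<bullet> P)" for j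
    by (intro linear_compose_sub bounded_linear.linear bounded_linear_vec_nth
        bounded_linear_inner_right)
  then have "convex_on UNIV (\<lambda>P. \<Sum>j\<in>UNIV - {i}. exp (P $ j - LSE_linearization Pk P))"
    unfolding affine by (intro convex_on_sum_fun convex_on_compose_affine exp_convex) auto
  then show ?thesis
    unfolding softmax_lower_eq[abs_def] by (intro concave_on_diff) (auto simp: concave_on_const)
qed

theorem lemma1:
  fixes Pk :: "real^'m" and i :: 'm
  assumes "CARD('m) \<ge> 2"
  shows "(\<forall>P :: real^'m. softmax P i \<ge> softmax_lower Pk i P)
         \<and> concave_on UNIV (softmax_lower Pk i)"
  using softmax_ge_softmax_lower concave_softmax_lower by blast

end
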